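(* Let $x^*\in\mathcal{X}$. If for every neighborhood $U$ of $x^*$ in $\mathcal{X}$ there is a solution $y_U(t)$ of $\dot y_k=v_k(Q(y))$, $k\in\mathcal{N}$, such that $x_U(t)=Q(y_U(t))\in U$ for all $t\ge0$, then $x^*$ is a Nash equilibrium.
   Context: Setting: finite game with players $\mathcal{N}$, action sets $\mathcal{A}_k$, mixed strategies $\mathcal{X}_k=\Delta(\mathcal{A}_k)$, $\mathcal{X}=\prod_k\mathcal{X}_k$, multilinear expected payoffs $u_k$, payoff vectors $v_k(x)=(u_k(\alpha;x_{-k}))_{\alpha\in\mathcal{A}_k}$. Each player has a penalty function $h_k$ on $\mathcal{X}_k$ (continuous, $C^\infty$ on relative interiors of faces, strongly convex: $h(tx_1+(1-t)x_2)\le th(x_1)+(1-t)h(x_2)-\tfrac12Kt(1-t)\|x_1-x_2\|^2$, $K>0$), with choice map $Q_k(y_k)=\arg\max_{x_k\in\mathcal{X}_k}\{\langle y_k,x_k\rangle-h_k(x_k)\}$; $Q=(Q_k)_k$. Nash equilibrium: $u_k(x^* )\ge u_k(x_k;x^*_{-k})$ for all $x_k\in\mathcal{X}_k$, $k\in\mathcal{N}$. *)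

theory Defs
  imports "HOL-Analysis.Analysis"
begin

text \<open>Players: the finite type 'n (all of UNIV). Player k has finite nonempty
action set A k inside the ambient action type 'a. Mixed strategies of player k are
functions 'a => real supported on A k, nonnegative and summing to 1.
pay k alpha is the payoff of player k at the pure profile alpha.\<close>

definition mixed :: "'a set \<Rightarrow> ('a \<Rightarrow> real) set" where
  "mixed Ak = {xk. (\<forall>a. a \<notin> Ak \<longrightarrow> xk a = 0) \<and> (\<forall>a\<in>Ak. 0 \<le> xk a) \<and> sum xk Ak = 1}"

definition profiles :: "('n \<Rightarrow> 'a set) \<Rightarrow> ('n \<Rightarrow> 'a \<Rightarrow> real) set" where
  "profiles A = {x. \<forall>k. x k \<in> mixed (A k)}"

definition exp_payoff :: "('n::finite \<Rightarrow> 'a set) \<Rightarrow> ('n \<Rightarrow> ('n \<Rightarrow> 'a) \<Rightarrow> real)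
    \<Rightarrow> 'n \<Rightarrow> ('n \<Rightarrow> 'a \<Rightarrow> real) \<Rightarrow> real" where
  "exp_payoff A pay k x = (\<Sum>\<alpha>\<in>PiE UNIV A. (\<Prod>l\<in>UNIV. x l (\<alpha> l)) * pay k \<alpha>)"

definition payoff_vec :: "('n::finite \<Rightarrow> 'a set) \<Rightarrow> ('n \<Rightarrow> ('n \<Rightarrow> 'a) \<Rightarrow> real)
    \<Rightarrow> 'n \<Rightarrow> ('n \<Rightarrow> 'a \<Rightarrow> real) \<Rightarrow> 'a \<Rightarrow> real" where
  "payoff_vec A pay k x a = exp_payoff A pay k (x(k := (\<lambda>b. if b = a then 1 else 0)))"

definition nash_eq :: "('n::finite \<Rightarrow> 'a set) \<Rightarrow> ('n \<Rightarrow> ('n \<Rightarrow> 'a) \<Rightarrow> real)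
    \<Rightarrow> ('n \<Rightarrow> 'a \<Rightarrow> real) \<Rightarrow> bool" where
  "nash_eq A pay xs \<longleftrightarrow> xs \<in> profiles A \<and>
     (\<forall>k. \<forall>xk\<in>mixed (A k). exp_payoff A pay k (xs(k := xk)) \<le> exp_payoff A pay k xs)"

definition choice :: "'a set \<Rightarrow> (('a \<Rightarrow> real) \<Rightarrow> real) \<Rightarrow> ('a \<Rightarrow> real) \<Rightarrow> ('a \<Rightarrow> real)" where
  "choice Ak hk yk = (THE xk. xk \<in> mixed Ak \<and>
     (\<forall>x'\<in>mixed Ak. (\<Sum>a\<in>Ak. yk a * x' a) - hk x' \<le> (\<Sum>a\<in>Ak. yk a * xk a) - hk xk))"

definition choice_map :: "('n \<Rightarrow> 'a set) \<Rightarrow> ('n \<Rightarrow> ('a \<Rightarrow> real) \<Rightarrow> real)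
    \<Rightarrow> ('n \<Rightarrow> 'a \<Rightarrow> real) \<Rightarrow> ('n \<Rightarrow> 'a \<Rightarrow> real)" where
  "choice_map A h y = (\<lambda>k. choice (A k) (h k) (y k))"

definition strongly_convex_on :: "'a set \<Rightarrow> real \<Rightarrow> (('a \<Rightarrow> real) \<Rightarrow> real) \<Rightarrow> bool" where
  "strongly_convex_on Ak K hk \<longleftrightarrow> (\<forall>x1\<in>mixed Ak. \<forall>x2\<in>mixed Ak. \<forall>t::real. 0 \<le> t \<and> t \<le> 1 \<longrightarrow>
     hk (\<lambda>a. t * x1 a + (1 - t) * x2 a) \<le> t * hk x1 + (1 - t) * hk x2
        - K * t * (1 - t) * (\<Sum>a\<in>Ak. (x1 a - x2 a)\<^sup>2) / 2)"

text \<open>The face of the simplex spanned by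
S (nonempty, S within A_k) has relative interior consisting of strategies with support
exactly S; its tangent space consists of directions supported on S with zero sum.
C-infinity is expressed as: all iterated directional derivatives along tangent
directions exist and are continuous on the relative interior.\<close>
definition face_relint :: "'a set \<Rightarrow> 'a set \<Rightarrow> ('a \<Rightarrow> real) set" where
  "face_relint Ak S = {x \<in> mixed Ak. \<forall>a\<in>Ak. 0 < x a \<longleftrightarrow> a \<in> S}"

definition face_tangent :: "'a set \<Rightarrow> ('a \<Rightarrow> real) set" where
  "face_tangent S = {d. (\<forall>a. a \<notin> S \<longrightarrow> d a = 0) \<and> sum d S = 0}"

fun dirderiv :: "(('a \<Rightarrow> real) \<Rightarrow> real) \<Rightarrow> ('a \<Rightarrow> real) list \<Rightarrow> ('a \<Rightarrow> real) \<Rightarrow> real" where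
  "dirderiv f [] x = f x"
| "dirderiv f (d # ds) x = deriv (\<lambda>t. dirderiv f ds (\<lambda>a. x a + t * d a)) 0"

definition smooth_on_faces :: "'a set \<Rightarrow> (('a \<Rightarrow> real) \<Rightarrow> real) \<Rightarrow> bool" where
  "smooth_on_faces Ak hk \<longleftrightarrow> (\<forall>S. S \<noteq> {} \<and> S \<subseteq> Ak \<longrightarrow>
     (\<forall>ds. set ds \<subseteq> face_tangent S \<longrightarrow>
        continuous_on (face_relint Ak S) (dirderiv hk ds) \<and>
        (\<forall>d\<in>face_tangent S. \<forall>x\<in>face_relint Ak S.
           (\<lambda>t. dirderiv hk ds (\<lambda>a. x a + t * d a)) differentiable (at 0))))"

definition penalty :: "'a set \<Rightarrow> (('a \<Rightarrow> real) \<Rightarrow> real) \<Rightarrow> bool" where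
  "penalty Ak hk \<longleftrightarrow> continuous_on (mixed Ak) hk \<and> smooth_on_faces Ak hk \<and>
     (\<exists>K>0. strongly_convex_on Ak K hk)"

definition is_solution :: "('n::finite \<Rightarrow> 'a set) \<Rightarrow> ('n \<Rightarrow> ('n \<Rightarrow> 'a) \<Rightarrow> real)
    \<Rightarrow> ('n \<Rightarrow> ('a \<Rightarrow> real) \<Rightarrow> real) \<Rightarrow> (real \<Rightarrow> 'n \<Rightarrow> 'a \<Rightarrow> real) \<Rightarrow> bool" where
  "is_solution A pay h y \<longleftrightarrow> (\<forall>t\<ge>0. \<forall>k. \<forall>a\<in>A k.
     ((\<lambda>s. y s k a) has_real_derivative payoff_vec A pay k (choice_map A h (y t)) a)
       (at t within {0..}))"

end

theory Submission
  imports Defs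
begin

text \<open>Suppose x* is not a Nash equilibrium. Then some player k has a pure strategy
\<alpha> in the support of x*_k and a pure strategy \<beta> that earns strictly more against x*.
On a small neighbourhood of x* this gap persists and x_k(\<alpha>) stays bounded away
from zero, so along a solution trapped there the score difference y_k\<beta> - y_k\<alpha> grows
linearly. On the other hand, moving the mass x_k(\<alpha>) from \<alpha> to \<beta> cannot improve
the objective maximised by Q_k, which bounds x_k(\<alpha>) (y_k\<beta> - y_k\<alpha>) by the range
of h_k on the simplex. The two estimates are incompatible.\<close>

lemma continuous_on_coordinate: "continuous_on S (\<lambda>x::'a \<Rightarrow> real. x a)"
  by (rule continuous_on_subset[OF continuous_on_product_coordinates subset_UNIV])

lemma continuous_on_profile_coordinate: "continuous_on UNIV (\<lambda>x::'n \<Rightarrow> 'a \<Rightarrow> real. x k a)"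
  by (rule continuous_on_product_then_coordinatewise[OF continuous_on_product_coordinates])

lemma compact_mixed:
  assumes "finite Ak"
  shows "compact (mixed Ak)"
proof -
  define S where "S = (\<lambda>a. if a \<in> Ak then {0..1::real} else {0})"
  have "compactin (product_topology (\<lambda>i. euclidean) UNIV) (PiE UNIV S)"
    unfolding compactin_PiE S_def by auto
  then have "compact (PiE UNIV S)"
    by (simp add: euclidean_product_topology)
  moreover have "closed {x::'a \<Rightarrow> real. sum x Ak = 1}"
    by (intro closed_Collect_eq continuous_on_sum continuous_on_coordinate continuous_on_const)
  moreover have "mixed Ak = PiE UNIV S \<inter> {x. sum x Ak = 1}"
  proof (intro set_eqI iffI)
    fix x assume x: "x \<in> mixed Ak"
    have "x a \<le> 1" if "a \<in> Ak" for a
    proof -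
      have "x a \<le> sum x Ak"
        using x that assms by (intro member_le_sum) (auto simp: mixed_def)
      then show ?thesis using x by (simp add: mixed_def)
    qed
    then show "x \<in> PiE UNIV S \<inter> {x. sum x Ak = 1}"
      using x by (auto simp: mixed_def S_def)
  qed (auto simp: mixed_def S_def PiE_iff split: if_splits)
  ultimately show ?thesis by auto
qed

lemma mixed_nonempty:
  assumes "finite Ak" "Ak \<noteq> {}"
  shows "mixed Ak \<noteq> {}"
proof -
  obtain a where "a \<in> Ak" using assms by auto
  then have "(\<lambda>b. if b = a then 1 else 0) \<in> mixed Ak"
    using assms by (auto simp: mixed_def)
  then show ?thesis by auto
qed

lemma mixed_convex_comb:
  assumes "x1 \<in> mixed Ak" "x2 \<in> mixed Ak" "0 \<le> t" "t \<le> 1" "finite Ak"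
  shows "(\<lambda>a. t * x1 a + (1 - t) * x2 a) \<in> mixed Ak"
  using assms by (auto simp: mixed_def sum.distrib sum_distrib_left[symmetric])

lemma mixed_average_le_max:
  assumes "finite S" "q \<in> mixed S"
  obtains \<beta> where "\<beta> \<in> S" "(\<Sum>a\<in>S. q a * v a) \<le> v \<beta>"
proof -
  have "S \<noteq> {}" using assms(2) by (auto simp: mixed_def)
  then have "Max (v ` S) \<in> v ` S" using assms(1) by simp
  then obtain \<beta> where \<beta>: "\<beta> \<in> S" "v \<beta> = Max (v ` S)" by auto
  have "(\<Sum>a\<in>S. q a * v a) \<le> (\<Sum>a\<in>S. q a * v \<beta>)"
    using assms \<beta> by (intro sum_mono mult_left_mono) (auto simp: mixed_def)
  also have "\<dots> = v \<beta>"
    using assms(2) by (simp add: sum_distrib_right[symmetric] mixed_def)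
  finally show ?thesis using that \<beta>(1) by blast
qed

lemma mixed_average_ge_min_on_support:
  assumes "finite S" "p \<in> mixed S"
  obtains \<alpha> where "\<alpha> \<in> S" "0 < p \<alpha>" "v \<alpha> \<le> (\<Sum>a\<in>S. p a * v a)"
proof -
  define P where "P = {a \<in> S. 0 < p a}"
  have fin: "finite P" using assms(1) by (simp add: P_def)
  have zero: "p a = 0" if "a \<in> S - P" for a
    using that assms(2) by (force simp: P_def mixed_def)
  have "sum p P = sum p S"
    using assms(1) zero by (intro sum.mono_neutral_left) (auto simp: P_def)
  then have sum1: "sum p P = 1" using assms(2) by (simp add: mixed_def)
  then have "P \<noteq> {}" by auto
  then have "Min (v ` P) \<in> v ` P" using fin by simp
  then obtain \<alpha> where \<alpha>: "\<alpha> \<in> P" "v \<alpha> = Min (v ` P)" by auto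
  have "v \<alpha> = (\<Sum>a\<in>P. p a * v \<alpha>)"
    using sum1 by (simp add: sum_distrib_right[symmetric])
  also have "\<dots> \<le> (\<Sum>a\<in>P. p a * v a)"
    using fin \<alpha> by (intro sum_mono mult_left_mono) (auto simp: P_def)
  also have "\<dots> = (\<Sum>a\<in>S. p a * v a)"
    using assms(1) zero by (intro sum.mono_neutral_left) (auto simp: P_def)
  finally show ?thesis using that \<alpha>(1) by (auto simp: P_def)
qed

lemma penalized_maximizer_unique:
  assumes fin: "finite Ak" and K: "K > 0" "strongly_convex_on Ak K hk"
    and F_def: "F = (\<lambda>x. (\<Sum>a\<in>Ak. yk a * x a) - hk x)"
    and x: "x \<in> mixed Ak" "\<forall>z\<in>mixed Ak. F z \<le> F x"
    and x': "x' \<in> mixed Ak" "\<forall>z\<in>mixed Ak. F z \<le> F x'"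
  shows "x = x'"
proof (rule ccontr)
  assume "x \<noteq> x'"
  then obtain b where "x b \<noteq> x' b" by auto
  then have "b \<in> Ak" using x(1) x'(1) unfolding mixed_def by (metis (mono_tags, lifting) mem_Collect_eq)
  then have pos: "0 < (\<Sum>a\<in>Ak. (x a - x' a)\<^sup>2)"
    using \<open>x b \<noteq> x' b\<close> fin by (intro sum_pos2[of _ b]) auto
  define m where "m = (\<lambda>a. (1/2) * x a + (1 - 1/2) * x' a)"
  have "m \<in> mixed Ak" unfolding m_def by (rule mixed_convex_comb) (use x x' fin in auto)
  have "\<forall>t::real. 0 \<le> t \<and> t \<le> 1 \<longrightarrow> hk (\<lambda>a. t * x a + (1 - t) * x' a)
      \<le> t * hk x + (1 - t) * hk x' - K * t * (1 - t) * (\<Sum>a\<in>Ak. (x a - x' a)\<^sup>2) / 2"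
    using K(2) x(1) x'(1) unfolding strongly_convex_on_def by blast
  then have "hk m \<le> (1/2) * hk x + (1 - 1/2) * hk x' - K * (1/2) * (1 - 1/2) * (\<Sum>a\<in>Ak. (x a - x' a)\<^sup>2) / 2"
    unfolding m_def by (rule mp[OF spec[of _ "1/2"]]) simp
  moreover have "(\<Sum>a\<in>Ak. yk a * m a) = (1/2) * (\<Sum>a\<in>Ak. yk a * x a) + (1/2) * (\<Sum>a\<in>Ak. yk a * x' a)"
    unfolding m_def by (simp add: sum.distrib sum_distrib_left algebra_simps)
  ultimately have "F m > (1/2) * F x + (1/2) * F x'"
    using mult_pos_pos[OF K(1) pos] unfolding F_def by (simp add: algebra_simps)
  moreover have "F m \<le> F x" "F x' \<le> F x" "F m \<le> F x'"
    using x x' \<open>m \<in> mixed Ak\<close> by auto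
  ultimately show False by linarith
qed

lemma choice_maximizes:
  assumes fin: "finite Ak" and ne: "Ak \<noteq> {}" and pen: "penalty Ak hk"
  shows "choice Ak hk yk \<in> mixed Ak"
    and "\<And>x. x \<in> mixed Ak \<Longrightarrow>
      (\<Sum>a\<in>Ak. yk a * x a) - hk x \<le> (\<Sum>a\<in>Ak. yk a * choice Ak hk yk a) - hk (choice Ak hk yk)"
proof -
  define F where "F = (\<lambda>x. (\<Sum>a\<in>Ak. yk a * x a) - hk x)"
  obtain K where K: "K > 0" "strongly_convex_on Ak K hk" using pen by (auto simp: penalty_def)
  have "continuous_on (mixed Ak) F"
    using pen unfolding F_def penalty_def
    by (intro continuous_on_diff continuous_on_sum continuous_on_mult continuous_on_const
        continuous_on_coordinate) auto
  then obtain x0 where x0: "x0 \<in> mixed Ak" "\<forall>z\<in>mixed Ak. F z \<le> F x0"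
    using continuous_attains_sup[OF compact_mixed[OF fin] mixed_nonempty[OF fin ne]] by blast
  then have "\<exists>!x. x \<in> mixed Ak \<and> (\<forall>z\<in>mixed Ak. F z \<le> F x)"
    using penalized_maximizer_unique[OF fin K F_def] by blast
  then have "choice Ak hk yk \<in> mixed Ak \<and> (\<forall>z\<in>mixed Ak. F z \<le> F (choice Ak hk yk))"
    unfolding choice_def F_def by (rule theI')
  then show "choice Ak hk yk \<in> mixed Ak"
    and "\<And>x. x \<in> mixed Ak \<Longrightarrow>
      (\<Sum>a\<in>Ak. yk a * x a) - hk x \<le> (\<Sum>a\<in>Ak. yk a * choice Ak hk yk a) - hk (choice Ak hk yk)"
    unfolding F_def by auto
qed

lemma penalty_bounded_oscillation:
  assumes fin: "finite Ak" and ne: "Ak \<noteq> {}" and pen: "penalty Ak hk"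
  obtains D where "\<And>x x'. x \<in> mixed Ak \<Longrightarrow> x' \<in> mixed Ak \<Longrightarrow> hk x' - hk x \<le> D"
proof -
  have hc: "continuous_on (mixed Ak) hk" using pen by (simp add: penalty_def)
  obtain u where "\<forall>z\<in>mixed Ak. hk z \<le> hk u"
    using continuous_attains_sup[OF compact_mixed[OF fin] mixed_nonempty[OF fin ne] hc] by blast
  moreover obtain l where "\<forall>z\<in>mixed Ak. hk l \<le> hk z"
    using continuous_attains_inf[OF compact_mixed[OF fin] mixed_nonempty[OF fin ne] hc] by blast
  ultimately show ?thesis by (intro that[of "hk u - hk l"]) force
qed

lemma choice_weight_times_score_gap_le:
  assumes fin: "finite Ak" and ne: "Ak \<noteq> {}" and pen: "penalty Ak hk"
    and D: "\<And>x x'. x \<in> mixed Ak \<Longrightarrow> x' \<in> mixed Ak \<Longrightarrow> hk x' - hk x \<le> D"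
    and \<alpha>: "\<alpha> \<in> Ak" and \<beta>: "\<beta> \<in> Ak" and "\<alpha> \<noteq> \<beta>"
  shows "choice Ak hk yk \<alpha> * (yk \<beta> - yk \<alpha>) \<le> D"
proof -
  define x where "x = choice Ak hk yk"
  have x: "x \<in> mixed Ak" using choice_maximizes(1)[OF fin ne pen] by (simp add: x_def)
  define e where "e = (\<lambda>c b::'a. if b = c then 1 else (0::real))"
  define x' where "x' = (\<lambda>a. x a + x \<alpha> * (e \<beta> a - e \<alpha> a))"
  have x': "x' \<in> mixed Ak"
    using x \<alpha> \<beta> \<open>\<alpha> \<noteq> \<beta>\<close> fin
    by (auto simp: mixed_def x'_def e_def sum.distrib sum_distrib_left[symmetric] sum_subtractf)
  have ye: "(\<Sum>a\<in>Ak. yk a * e c a) = yk c" if "c \<in> Ak" for c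
  proof -
    have "(\<Sum>a\<in>Ak. yk a * e c a) = (\<Sum>a\<in>Ak. if a = c then yk c else 0)"
      by (rule sum.cong) (auto simp: e_def)
    then show ?thesis using that fin by simp
  qed
  have "(\<Sum>a\<in>Ak. yk a * x' a)
      = (\<Sum>a\<in>Ak. yk a * x a) + x \<alpha> * ((\<Sum>a\<in>Ak. yk a * e \<beta> a) - (\<Sum>a\<in>Ak. yk a * e \<alpha> a))"
    unfolding x'_def by (simp add: algebra_simps sum.distrib sum_subtractf sum_distrib_left)
  also have "\<dots> = (\<Sum>a\<in>Ak. yk a * x a) + x \<alpha> * (yk \<beta> - yk \<alpha>)"
    using ye[OF \<alpha>] ye[OF \<beta>] by simp
  finally have "x \<alpha> * (yk \<beta> - yk \<alpha>) \<le> hk x' - hk x"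
    using choice_maximizes(2)[OF fin ne pen x', where yk = yk] unfolding x_def by linarith
  also have "\<dots> \<le> D" using D x x' by auto
  finally show ?thesis unfolding x_def .
qed

lemma prod_fun_upd_profile:
  fixes x :: "'n::finite \<Rightarrow> 'a \<Rightarrow> real"
  shows "(\<Prod>l\<in>UNIV. (x(k := w)) l (\<alpha> l)) = w (\<alpha> k) * (\<Prod>l\<in>UNIV - {k}. x l (\<alpha> l))"
proof -
  have "(\<Prod>l\<in>UNIV. (x(k := w)) l (\<alpha> l))
      = (x(k := w)) k (\<alpha> k) * (\<Prod>l\<in>UNIV - {k}. (x(k := w)) l (\<alpha> l))"
    by (rule prod.remove) auto
  also have "(\<Prod>l\<in>UNIV - {k}. (x(k := w)) l (\<alpha> l)) = (\<Prod>l\<in>UNIV - {k}. x l (\<alpha> l))"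
    by (rule prod.cong) auto
  finally show ?thesis by simp
qed

lemma exp_payoff_fun_upd:
  fixes A :: "'n::finite \<Rightarrow> 'a set"
  assumes fin: "finite (A k)"
  shows "exp_payoff A pay k (x(k := z)) = (\<Sum>a\<in>A k. z a * payoff_vec A pay k x a)"
proof -
  define R where "R = (\<lambda>\<alpha>. \<Prod>l\<in>UNIV - {k}. x l (\<alpha> l))"
  have "(\<Sum>a\<in>A k. z a * payoff_vec A pay k x a)
      = (\<Sum>a\<in>A k. \<Sum>\<alpha>\<in>PiE UNIV A. z a * ((if \<alpha> k = a then 1 else 0) * R \<alpha> * pay k \<alpha>))"
    unfolding payoff_vec_def exp_payoff_def prod_fun_upd_profile R_def by (simp add: sum_distrib_left)
  also have "\<dots> = (\<Sum>\<alpha>\<in>PiE UNIV A. \<Sum>a\<in>A k. z a * ((if \<alpha> k = a then 1 else 0) * R \<alpha> * pay k \<alpha>))"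
    by (rule sum.swap)
  also have "\<dots> = (\<Sum>\<alpha>\<in>PiE UNIV A. z (\<alpha> k) * R \<alpha> * pay k \<alpha>)"
  proof (rule sum.cong[OF refl])
    fix \<alpha> assume "\<alpha> \<in> PiE UNIV A"
    then have "\<alpha> k \<in> A k" by (auto simp: PiE_iff)
    show "(\<Sum>a\<in>A k. z a * ((if \<alpha> k = a then 1 else 0) * R \<alpha> * pay k \<alpha>)) = z (\<alpha> k) * R \<alpha> * pay k \<alpha>"
    proof -
      have "(\<Sum>a\<in>A k. z a * ((if \<alpha> k = a then 1 else 0) * R \<alpha> * pay k \<alpha>))
          = (\<Sum>a\<in>A k. if \<alpha> k = a then z (\<alpha> k) * R \<alpha> * pay k \<alpha> else 0)"
        by (rule sum.cong) auto
      then show ?thesis using \<open>\<alpha> k \<in> A k\<close> fin by simp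
    qed
  qed
  also have "\<dots> = exp_payoff A pay k (x(k := z))"
    unfolding exp_payoff_def prod_fun_upd_profile R_def by simp
  finally show ?thesis by simp
qed

lemma continuous_on_payoff_vec:
  fixes A :: "'n::finite \<Rightarrow> 'a set"
  shows "continuous_on UNIV (\<lambda>x. payoff_vec A pay k x a)"
  unfolding payoff_vec_def exp_payoff_def prod_fun_upd_profile
  by (intro continuous_on_sum continuous_on_mult continuous_on_prod continuous_on_const
      continuous_on_profile_coordinate)

lemma not_nash_eq_imp_better_pure_reply:
  fixes A :: "'n::finite \<Rightarrow> 'a set"
  assumes fin: "\<And>k. finite (A k)" and xs: "xs \<in> profiles A" and "\<not> nash_eq A pay xs"
  obtains k \<alpha> \<beta> where "\<alpha> \<in> A k" "\<beta> \<in> A k" "0 < xs k \<alpha>"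
    "payoff_vec A pay k xs \<alpha> < payoff_vec A pay k xs \<beta>"
proof -
  obtain k xk where xk: "xk \<in> mixed (A k)"
    and "exp_payoff A pay k xs < exp_payoff A pay k (xs(k := xk))"
    using assms(2,3) unfolding nash_eq_def by (auto simp: not_le)
  then have better: "(\<Sum>a\<in>A k. xs k a * payoff_vec A pay k xs a) < (\<Sum>a\<in>A k. xk a * payoff_vec A pay k xs a)"
    using exp_payoff_fun_upd[of A k pay xs "xs k", OF fin] exp_payoff_fun_upd[of A k pay xs xk, OF fin]
    by simp
  have "xs k \<in> mixed (A k)" using xs by (simp add: profiles_def)
  then obtain \<alpha> where "\<alpha> \<in> A k" "0 < xs k \<alpha>"
    "payoff_vec A pay k xs \<alpha> \<le> (\<Sum>a\<in>A k. xs k a * payoff_vec A pay k xs a)"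
    using mixed_average_ge_min_on_support[OF fin] by blast
  moreover obtain \<beta> where "\<beta> \<in> A k"
    "(\<Sum>a\<in>A k. xk a * payoff_vec A pay k xs a) \<le> payoff_vec A pay k xs \<beta>"
    using mixed_average_le_max[OF fin xk] by blast
  ultimately show ?thesis using that better by fastforce
qed

lemma has_real_derivative_lower_bound_imp_linear_growth:
  fixes g g' :: "real \<Rightarrow> real"
  assumes der: "\<And>t. 0 \<le> t \<Longrightarrow> (g has_real_derivative g' t) (at t within {0..})"
    and lb: "\<And>t. 0 \<le> t \<Longrightarrow> c \<le> g' t" and "0 \<le> T"
  shows "g 0 + c * T \<le> g T"
proof -
  define f where "f = (\<lambda>s. g s - c * s)"
  have f_der: "(f has_real_derivative g' t - c) (at t within {0..})" if "0 \<le> t" for t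
    unfolding f_def using DERIV_diff[OF der[OF that] DERIV_cmult[OF DERIV_ident, of c t "{0..}"]] by simp
  have "f 0 \<le> f T"
  proof (rule DERIV_nonneg_imp_increasing_open[OF \<open>0 \<le> T\<close>])
    fix s :: real assume s: "0 < s" "s < T"
    have "at s within {0..} = at s"
      using s by (intro at_within_interior) auto
    then have "(f has_real_derivative g' s - c) (at s)"
      using f_der[of s] s by simp
    moreover have "0 \<le> g' s - c" using lb[of s] s by simp
    ultimately show "\<exists>y. (f has_real_derivative y) (at s) \<and> 0 \<le> y" by blast
  next
    have "continuous (at t within {0..}) f" if "0 \<le> t" for t
      using DERIV_continuous[OF f_der[OF that]] .
    then have "continuous_on {0..} f"
      by (simp add: continuous_on_eq_continuous_within)
    then show "continuous_on {0..T} f"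
      by (rule continuous_on_subset) auto
  qed
  then show ?thesis by (simp add: f_def)
qed

lemma solution_score_gap_grows:
  assumes sol: "is_solution A pay h y" and \<alpha>: "\<alpha> \<in> A k" and \<beta>: "\<beta> \<in> A k"
    and gap: "\<And>t. 0 \<le> t \<Longrightarrow>
      c \<le> payoff_vec A pay k (choice_map A h (y t)) \<beta> - payoff_vec A pay k (choice_map A h (y t)) \<alpha>"
    and "0 \<le> T"
  shows "y 0 k \<beta> - y 0 k \<alpha> + c * T \<le> y T k \<beta> - y T k \<alpha>"
proof (rule has_real_derivative_lower_bound_imp_linear_growth[OF _ gap \<open>0 \<le> T\<close>])
  fix t :: real assume "0 \<le> t"
  then show "((\<lambda>s. y s k \<beta> - y s k \<alpha>) has_real_derivative
      payoff_vec A pay k (choice_map A h (y t)) \<beta> - payoff_vec A pay k (choice_map A h (y t)) \<alpha>)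
      (at t within {0..})"
    using sol \<alpha> \<beta> by (intro DERIV_diff) (auto simp: is_solution_def)
qed

theorem proposition5p2:
  fixes A :: "'n::finite \<Rightarrow> 'a set"
    and pay :: "'n \<Rightarrow> ('n \<Rightarrow> 'a) \<Rightarrow> real"
    and h :: "'n \<Rightarrow> ('a \<Rightarrow> real) \<Rightarrow> real"
    and xs :: "'n \<Rightarrow> 'a \<Rightarrow> real"
  assumes fin: "\<And>k. finite (A k)"
    and ne: "\<And>k. A k \<noteq> {}"
    and pen: "\<And>k. penalty (A k) (h k)"
    and xs: "xs \<in> profiles A"
    and hyp: "\<And>U. open U \<Longrightarrow> xs \<in> U \<Longrightarrow>
               \<exists>y. is_solution A pay h y \<and> (\<forall>t\<ge>0. choice_map A h (y t) \<in> U)"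
  shows "nash_eq A pay xs"
proof (rule ccontr)
  assume "\<not> nash_eq A pay xs"
  then obtain k \<alpha> \<beta> where \<alpha>: "\<alpha> \<in> A k" and \<beta>: "\<beta> \<in> A k" and "0 < xs k \<alpha>"
    and "payoff_vec A pay k xs \<alpha> < payoff_vec A pay k xs \<beta>"
    using not_nash_eq_imp_better_pure_reply[OF fin xs] by blast
  define c where "c = (payoff_vec A pay k xs \<beta> - payoff_vec A pay k xs \<alpha>) / 2"
  define \<delta> where "\<delta> = xs k \<alpha> / 2"
  have "0 < c" "0 < \<delta>" "\<alpha> \<noteq> \<beta>"
    using \<open>0 < xs k \<alpha>\<close> \<open>payoff_vec A pay k xs \<alpha> < _\<close> by (auto simp: c_def \<delta>_def)
  define U where "U = {x. \<delta> < x k \<alpha>} \<inter> {x. c < payoff_vec A pay k x \<beta> - payoff_vec A pay k x \<alpha>}"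
  have "open U" unfolding U_def
    by (intro open_Int open_Collect_less continuous_on_const continuous_on_profile_coordinate
        continuous_on_diff continuous_on_payoff_vec)
  moreover have "xs \<in> U"
    using \<open>0 < c\<close> \<open>0 < \<delta>\<close> by (simp add: U_def c_def \<delta>_def)
  ultimately obtain y where sol: "is_solution A pay h y" and inU: "\<forall>t\<ge>0. choice_map A h (y t) \<in> U"
    using hyp by blast
  obtain D where D: "\<And>x x'. x \<in> mixed (A k) \<Longrightarrow> x' \<in> mixed (A k) \<Longrightarrow> h k x' - h k x \<le> D"
    using penalty_bounded_oscillation[OF fin ne pen] by blast
  define g where "g t = y t k \<beta> - y t k \<alpha>" for t
  have grows: "g 0 + c * T \<le> g T" if "0 \<le> T" for T
    unfolding g_def using inU by (intro solution_score_gap_grows[OF sol \<alpha> \<beta> _ that]) (auto simp: U_def)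
  have bounded: "g T \<le> D / \<delta>" if "0 \<le> T" for T
  proof (cases "g T \<le> 0")
    case True
    have "0 \<le> D" using D[of "xs k" "xs k"] xs by (simp add: profiles_def)
    then show ?thesis using True \<open>0 < \<delta>\<close> by (meson order.trans divide_nonneg_pos less_imp_le)
  next
    case False
    have "\<delta> * g T \<le> choice_map A h (y T) k \<alpha> * g T"
      using inU that False by (intro mult_right_mono) (auto simp: U_def)
    also have "\<dots> \<le> D" unfolding choice_map_def g_def
      by (rule choice_weight_times_score_gap_le[OF fin ne pen D \<alpha> \<beta> \<open>\<alpha> \<noteq> \<beta>\<close>])
    finally show ?thesis using \<open>0 < \<delta>\<close> by (simp add: pos_le_divide_eq mult.commute)
  qed
  define T where "T = max 0 ((D / \<delta> - g 0 + 1) / c)"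
  have "(D / \<delta> - g 0 + 1) / c \<le> T" by (simp add: T_def)
  then have "D / \<delta> - g 0 + 1 \<le> c * T"
    using \<open>0 < c\<close> by (simp add: pos_divide_le_eq mult.commute)
  moreover have "0 \<le> T" by (simp add: T_def)
  ultimately show False using grows[of T] bounded[of T] by linarith
qed

end
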